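(* Under (A1)–(A4), for any $\hat\beta\in\mathbb R^d$, $$\|\nabla R(\hat\beta)-\nabla R(\beta^* )\|_\infty\lesssim M_n\|\hat\beta-\beta^*\|_1,\qquad\|\nabla^2R(\hat\beta)-\nabla^2R(\beta^* )\|_{\max}\lesssim M_n\|\hat\beta-\beta^*\|_1.$$
   Context: Setting. $(X,Y,Z)$ is a random vector with $X\in\mathbb R$, $Y\in\{-1,1\}$ and $Z\in\mathbb R^d$. We write $a\lesssim b$ for $a\le Cb$ with a constant $C$ not depending on $n$ (the quantities $d$ and $M_n$ may depend on $n$). For a matrix $M$, $\|M\|_{\max}=\max|M_{ij}|$. Densities. $f(x\mid y,z)$ is the conditional density of $X$ given $(Y,Z)$. Risk. Let $w:\{-1,1\}\to(0,\infty)$ and $L_{01}(u)=\frac12(1-\mathrm{sign}(u))$, where $\mathrm{sign}(u)=1$ for $u\ge0$ and $-1$ otherwise. Define $R(\beta)=E[w(Y)L_{01}(Y(X-\beta^TZ))]$, with unique minimizer $\beta^*$. Smoothness definition. $f$ is $\ell$th order smooth if the following holds for all $z,y$: $f(\cdot\mid y,z)$ is $\ell$ times continuously differentiable, $|f^{(i)}|\le C$ for $i\le\ell$, and $|f^{(\ell)}(x+\Delta\mid y,z)-f^{(\ell)}(x\mid y,z)|\le L|\Delta|^\zeta$. Here $C,L$ are constants and $0<\zeta\le1$. Assumptions. (A1) $f$ is $\ell$th order smooth, with integer $\ell\ge2$. (A2) The smoothing kernel $K$ is supported on $[-1,1]$ and satisfies: - $K$ is symmetric and bounded, $\int K=1$,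 $\int K^2<\infty$, $K'$ bounded, and $K(\pm1)=0$; - $K$ has order $\ell$. (A3) $c\le P(Y=1)\le1-c$, and $w$ is positive and bounded. (A4) $|Z_j|\le M_n$ for all $j$ (with $M_n^2\le C\sqrt{n\delta/\log d}$ for a bandwidth $\delta$), and $E[Z_j^4\mid Y=y]$ is bounded. *)

theory Defs
  imports "HOL-Probability.Probability"
begin

definition sign01 :: "real \<Rightarrow> real" where
  "sign01 u = (if u \<ge> 0 then 1 else -1)"

definition L01 :: "real \<Rightarrow> real" where
  "L01 u = (1 - sign01 u) / 2"

text \<open>The joint law of (X,Y,Z) is described by p = P(Y=1), the conditional law Q y of Z
  given Y = y (a probability measure on R^d, represented on PiM {..<d}), and the conditional
  density f x y z of X given (Y,Z) = (y,z).  Vectors in R^d are functions nat => real,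
  only coordinates j < d are used.\<close>

definition risk :: "nat \<Rightarrow> real \<Rightarrow> (real \<Rightarrow> real) \<Rightarrow> (real \<Rightarrow> (nat \<Rightarrow> real) measure)
    \<Rightarrow> (real \<Rightarrow> real \<Rightarrow> (nat \<Rightarrow> real) \<Rightarrow> real) \<Rightarrow> (nat \<Rightarrow> real) \<Rightarrow> real" where
  "risk d p w Q f \<beta> =
     (\<Sum>y\<in>{1, -1::real}. (if y = 1 then p else 1 - p) * w y *
        (\<integral>z. (\<integral>x. L01 (y * (x - (\<Sum>j<d. \<beta> j * z j))) * f x y z \<partial>lborel) \<partial>Q y))"

definition gradR :: "nat \<Rightarrow> real \<Rightarrow> (real \<Rightarrow> real) \<Rightarrow> (real \<Rightarrow> (nat \<Rightarrow> real) measure)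
    \<Rightarrow> (real \<Rightarrow> real \<Rightarrow> (nat \<Rightarrow> real) \<Rightarrow> real) \<Rightarrow> (nat \<Rightarrow> real) \<Rightarrow> nat \<Rightarrow> real" where
  "gradR d p w Q f \<beta> j = deriv (\<lambda>t. risk d p w Q f (\<beta>(j := \<beta> j + t))) 0"

definition hessR :: "nat \<Rightarrow> real \<Rightarrow> (real \<Rightarrow> real) \<Rightarrow> (real \<Rightarrow> (nat \<Rightarrow> real) measure)
    \<Rightarrow> (real \<Rightarrow> real \<Rightarrow> (nat \<Rightarrow> real) \<Rightarrow> real) \<Rightarrow> (nat \<Rightarrow> real) \<Rightarrow> nat \<Rightarrow> nat \<Rightarrow> real" where
  "hessR d p w Q f \<beta> j k = deriv (\<lambda>t. gradR d p w Q f (\<beta>(k := \<beta> k + t)) j) 0"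

definition smooth_order :: "nat \<Rightarrow> real \<Rightarrow> real \<Rightarrow> real \<Rightarrow> (real \<Rightarrow> real \<Rightarrow> (nat \<Rightarrow> real) \<Rightarrow> real) \<Rightarrow> bool" where
  "smooth_order l C L \<zeta> f \<longleftrightarrow>
     (\<forall>y\<in>{1, -1::real}. \<forall>z.
        (\<forall>i<l. \<forall>x. ((deriv ^^ i) (\<lambda>x. f x y z) has_real_derivative (deriv ^^ Suc i) (\<lambda>x. f x y z) x) (at x))
      \<and> continuous_on UNIV ((deriv ^^ l) (\<lambda>x. f x y z))
      \<and> (\<forall>i\<le>l. \<forall>x. \<bar>(deriv ^^ i) (\<lambda>x. f x y z) x\<bar> \<le> C)
      \<and> (\<forall>x \<Delta>. \<bar>(deriv ^^ l) (\<lambda>x. f x y z) (x + \<Delta>) - (deriv ^^ l) (\<lambda>x. f x y z) x\<bar> \<le> L * \<bar>\<Delta>\<bar> powr \<zeta>))"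

definition kernel_ok :: "nat \<Rightarrow> (real \<Rightarrow> real) \<Rightarrow> bool" where
  "kernel_ok l K \<longleftrightarrow>
     (\<forall>u. \<bar>u\<bar> > 1 \<longrightarrow> K u = 0)
   \<and> (\<forall>u. K (-u) = K u)
   \<and> (\<exists>b. \<forall>u. \<bar>K u\<bar> \<le> b)
   \<and> integrable lborel K \<and> (\<integral>u. K u \<partial>lborel) = 1
   \<and> integrable lborel (\<lambda>u. (K u)\<^sup>2)
   \<and> (\<exists>b. \<forall>u\<in>{-1<..<1}. (K has_real_derivative deriv K u) (at u) \<and> \<bar>deriv K u\<bar> \<le> b)
   \<and> K 1 = 0 \<and> K (-1) = 0
   \<and> (\<forall>i. 1 \<le> i \<and> i < l \<longrightarrow> integrable lborel (\<lambda>u. u ^ i * K u) \<and> (\<integral>u. u ^ i * K u \<partial>lborel) = 0)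
   \<and> integrable lborel (\<lambda>u. \<bar>u\<bar> ^ l * \<bar>K u\<bar>)"

definition cond_density :: "nat \<Rightarrow> (real \<Rightarrow> real \<Rightarrow> (nat \<Rightarrow> real) \<Rightarrow> real) \<Rightarrow> bool" where
  "cond_density d f \<longleftrightarrow>
     (\<forall>y\<in>{1, -1::real}.
        (\<lambda>(x, z). f x y z) \<in> borel_measurable (lborel \<Otimes>\<^sub>M PiM {..<d} (\<lambda>_. borel))
      \<and> (\<forall>z. (\<forall>x. f x y z \<ge> 0) \<and> integrable lborel (\<lambda>x. f x y z) \<and> (\<integral>x. f x y z \<partial>lborel) = 1))"

end

theory Submission
  imports Defs
begin

(* Write R(beta) = sum_y pi_y w(y) E[rho_y(beta^T Z) | Y = y], where rho_y(a) is the integral of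
   L01(y (x - a)) f(x | y, Z) dx, so that rho_y' = y f(. | y, Z).  Because f(. | y, z) has bounded
   first and second derivatives and |Z_j| <= M_n, the difference quotients in beta have uniformly
   quadratic remainders, which justifies differentiating under the integral:
     dR/dbeta_j = sum_y pi_y w(y) E[y Z_j f(beta^T Z | y, Z)],
     d2R/dbeta_j dbeta_k = sum_y pi_y w(y) E[y Z_j Z_k f'(beta^T Z | y, Z)].
   The Lipschitz bounds on f and f' then control the gradient difference by
   C E|Z_j Z^T (beta1 - beta2)| <= C |beta1 - beta2|_1 max_i E|Z_j Z_i| and the Hessian difference by
   C M_n |beta1 - beta2|_1 E|Z_j Z_k|, and E|Z_j Z_i| <= min (M_n^2, (B + 1) / 2) <= M_n max (1, (B + 1) / 2)
   by the fourth-moment bound. *)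

section \<open>Quadratic remainders and differentiation under the integral\<close>

lemma taylor_remainder_le:
  fixes g g' :: "real \<Rightarrow> real"
  assumes deriv: "\<And>x. (g has_real_derivative g' x) (at x)"
    and lipschitz: "\<And>u v. \<bar>g' u - g' v\<bar> \<le> C * \<bar>u - v\<bar>"
  shows "\<bar>g (a + h) - g a - h * g' a\<bar> \<le> C * h\<^sup>2"
proof -
  have "norm (g (a + h) - g a - (a + h - a) *\<^sub>R g' a) \<le> norm (a + h - a) * (C * \<bar>h\<bar>)"
  proof (rule vector_differentiable_bound_linearization
      [where S = "closed_segment a (a + h)" and f' = g' and ?x0.0 = a])
    show "(g has_vector_derivative g' x) (at x within closed_segment a (a + h))"
      if "x \<in> closed_segment a (a + h)" for x
      using deriv has_real_derivative_iff_has_vector_derivative has_field_derivative_at_within by blast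
    show "norm (g' x - g' a) \<le> C * \<bar>h\<bar>" if "x \<in> closed_segment a (a + h)" for x
    proof -
      have "\<bar>x - a\<bar> \<le> \<bar>h\<bar>" using segment_bound1[OF that] by simp
      moreover have "C \<ge> 0" using lipschitz[of 1 0] by simp
      ultimately show ?thesis using lipschitz[of x a] by (simp add: order_trans mult_left_mono)
    qed
  qed auto
  also have "\<dots> = C * h\<^sup>2" by (simp add: power2_eq_square algebra_simps)
  finally show ?thesis by simp
qed

lemma abs_diff_le_of_deriv_bound:
  fixes g g' :: "real \<Rightarrow> real"
  assumes "\<And>x. (g has_real_derivative g' x) (at x)" and "\<And>x. \<bar>g' x\<bar> \<le> C"
  shows "\<bar>g u - g v\<bar> \<le> C * \<bar>u - v\<bar>"
  using field_differentiable_bound[of UNIV g g' C u v] assms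
  by (simp add: has_field_derivative_at_within)

lemma has_real_derivative_of_quadratic_remainder:
  fixes q :: "real \<Rightarrow> real"
  assumes remainder: "\<And>t. \<bar>q (x + t) - q x - t * D\<bar> \<le> K * t\<^sup>2"
  shows "(q has_real_derivative D) (at x)"
proof -
  have "((\<lambda>t. (q (x + t) - q x) / t - D) \<longlongrightarrow> 0) (at 0)"
  proof (rule Lim_null_comparison)
    show "\<forall>\<^sub>F t in at 0. norm ((q (x + t) - q x) / t - D) \<le> K * \<bar>t\<bar>"
      unfolding eventually_at_filter
    proof (intro always_eventually allI impI)
      fix t :: real
      assume "t \<noteq> 0"
      then have "norm ((q (x + t) - q x) / t - D) = \<bar>q (x + t) - q x - t * D\<bar> / \<bar>t\<bar>"
        by (simp add: field_simps abs_divide)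
      also have "\<dots> \<le> K * t\<^sup>2 / \<bar>t\<bar>"
        using remainder by (simp add: divide_right_mono)
      also have "\<dots> = K * \<bar>t\<bar>"
        using \<open>t \<noteq> 0\<close> by (simp add: power2_eq_square field_simps)
      finally show "norm ((q (x + t) - q x) / t - D) \<le> K * \<bar>t\<bar>" .
    qed
    show "((\<lambda>t. K * \<bar>t\<bar>) \<longlongrightarrow> 0) (at 0)"
      by (auto intro!: tendsto_eq_intros)
  qed
  then show ?thesis
    unfolding DERIV_def by (rule LIM_zero_cancel)
qed

lemma abs_integral_le_AE:
  fixes f g :: "'a \<Rightarrow> real"
  assumes "integrable M g" "AE x in M. \<bar>f x\<bar> \<le> g x"
  shows "\<bar>\<integral>x. f x \<partial>M\<bar> \<le> (\<integral>x. g x \<partial>M)"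
proof -
  have "\<bar>\<integral>x. f x \<partial>M\<bar> \<le> (\<integral>x. \<bar>f x\<bar> \<partial>M)"
    using integral_norm_bound[of M f] by simp
  also have "\<dots> \<le> (\<integral>x. g x \<partial>M)"
    using assms(2) by (intro integral_mono_AE'[OF assms(1)]) (auto elim: eventually_mono)
  finally show ?thesis .
qed

lemma abs_integral_diff_le_AE:
  fixes f g h :: "'a \<Rightarrow> real"
  assumes "integrable M f" "integrable M g" "integrable M h"
    and "AE x in M. \<bar>f x - g x\<bar> \<le> h x"
  shows "\<bar>(\<integral>x. f x \<partial>M) - (\<integral>x. g x \<partial>M)\<bar> \<le> (\<integral>x. h x \<partial>M)"
  using abs_integral_le_AE[OF assms(3,4)] assms(1,2) by simp

lemma has_real_derivative_integral_of_quadratic_remainder: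
  fixes A :: "real \<Rightarrow> 'a \<Rightarrow> real"
  assumes "finite_measure M" "\<And>t. integrable M (A t)" "integrable M G"
    and remainder: "\<And>t. AE z in M. \<bar>A t z - A 0 z - t * G z\<bar> \<le> K * t\<^sup>2"
  shows "((\<lambda>t. \<integral>z. A t z \<partial>M) has_real_derivative (\<integral>z. G z \<partial>M)) (at 0)"
proof (rule has_real_derivative_of_quadratic_remainder[where K = "K * measure M (space M)"])
  fix t
  have "\<bar>(\<integral>z. A (0 + t) z \<partial>M) - (\<integral>z. A 0 z \<partial>M) - t * (\<integral>z. G z \<partial>M)\<bar>
      = \<bar>\<integral>z. A t z - A 0 z - t * G z \<partial>M\<bar>"
    using assms(2,3) by simp
  also have "\<dots> \<le> (\<integral>z. K * t\<^sup>2 \<partial>M)"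
    using assms(1) remainder by (intro abs_integral_le_AE finite_measure.integrable_const)
  finally show "\<bar>(\<integral>z. A (0 + t) z \<partial>M) - (\<integral>z. A 0 z \<partial>M) - t * (\<integral>z. G z \<partial>M)\<bar>
      \<le> K * measure M (space M) * t\<^sup>2"
    by (simp add: mult_ac)
qed

section \<open>The conditional risk of a threshold\<close>

definition cond_risk :: "real \<Rightarrow> (real \<Rightarrow> real) \<Rightarrow> real \<Rightarrow> real" where
  "cond_risk y g a = (\<integral>x. L01 (y * (x - a)) * g x \<partial>lborel)"

lemma cond_risk_pos: "cond_risk 1 g a = (LINT x:{..<a}|lborel. g x)"
  unfolding cond_risk_def set_lebesgue_integral_def L01_def sign01_def
  by (intro Bochner_Integration.integral_cong) (auto split: split_indicator)

lemma cond_risk_neg: "cond_risk (-1) g a = (LINT x:{a<..}|lborel. g x)"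
  unfolding cond_risk_def set_lebesgue_integral_def L01_def sign01_def
  by (intro Bochner_Integration.integral_cong) (auto split: split_indicator)

lemma abs_cond_risk_le_1:
  assumes "\<And>x. g x \<ge> 0" "integrable lborel g" "(\<integral>x. g x \<partial>lborel) = 1"
  shows "\<bar>cond_risk y g a\<bar> \<le> 1"
proof -
  have "\<bar>L01 (y * (x - a)) * g x\<bar> \<le> g x" for x
    using assms(1)[of x] by (auto simp: L01_def sign01_def abs_mult)
  then have "\<bar>cond_risk y g a\<bar> \<le> (\<integral>x. g x \<partial>lborel)"
    unfolding cond_risk_def using assms(2) by (intro abs_integral_le_AE) auto
  then show ?thesis using assms(3) by simp
qed

lemma integrable_imp_set_integrable:
  fixes g :: "'a \<Rightarrow> 'b::{banach, second_countable_topology}"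
  assumes "integrable M g" "S \<in> sets M"
  shows "set_integrable M S g"
  unfolding set_integrable_def by (rule integrable_mult_indicator[OF assms(2,1)])

lemma set_integral_lessThan_split:
  fixes g :: "real \<Rightarrow> real"
  assumes "integrable lborel g" "u \<le> v"
  shows "(LINT x:{..<v}|lborel. g x) = (LINT x:{..<u}|lborel. g x) + (LINT x:{u..<v}|lborel. g x)"
  using assms set_integral_Un[of "{..<u}" "{u..<v}" lborel g]
  by (simp add: integrable_imp_set_integrable ivl_disj_un disjoint_iff)

lemma set_integral_greaterThan_split:
  fixes g :: "real \<Rightarrow> real"
  assumes "integrable lborel g" "u \<le> v"
  shows "(LINT x:{u<..}|lborel. g x) = (LINT x:{u<..v}|lborel. g x) + (LINT x:{v<..}|lborel. g x)"
  using assms set_integral_Un[of "{u<..v}" "{v<..}" lborel g]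
  by (simp add: integrable_imp_set_integrable ivl_disj_un disjoint_iff)

lemma set_integral_interval_approx:
  fixes g :: "real \<Rightarrow> real"
  assumes S: "S \<in> sets borel" "{a<..<b} \<subseteq> S" "S \<subseteq> {a..b}" and c: "c \<in> {a..b}"
    and g: "integrable lborel g" and lipschitz: "\<And>u v. \<bar>g u - g v\<bar> \<le> C * \<bar>u - v\<bar>"
  shows "\<bar>(LINT x:S|lborel. g x) - (b - a) * g c\<bar> \<le> C * (b - a)\<^sup>2"
proof -
  have "C \<ge> 0" using lipschitz[of 1 0] by simp
  have "emeasure lborel {a<..<b} \<le> emeasure lborel S" "emeasure lborel S \<le> emeasure lborel {a..b}"
    using S by (auto intro!: emeasure_mono)
  then have "emeasure lborel S = ennreal (b - a)"
    using c by (simp add: antisym)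
  then have S_measure: "measure lborel S = b - a" and S_finite: "emeasure lborel S \<noteq> \<infinity>"
    using c by (auto simp: measure_def)
  have integrable_on_S: "set_integrable lborel S g" "set_integrable lborel S (\<lambda>_. g c)"
    using S(1) g S_finite integrable_imp_set_integrable[OF g, of S]
    unfolding set_integrable_def by (auto simp: less_top)
  have "(LINT x:S|lborel. g x) - (b - a) * g c = (LINT x:S|lborel. g x - g c)"
    using integrable_on_S S(1) S_finite by (simp add: set_integral_diff set_integral_const S_measure)
  also have "\<bar>\<dots>\<bar> \<le> (LINT x:S|lborel. C * (b - a))"
    unfolding set_lebesgue_integral_def
  proof (intro abs_integral_le_AE AE_I2)
    show "integrable lborel (\<lambda>x. indicator S x *\<^sub>R (C * (b - a)))"
      using S(1) S_finite by (auto simp: less_top intro: integrable_real_indicator)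
    show "\<bar>indicator S x *\<^sub>R (g x - g c)\<bar> \<le> indicator S x *\<^sub>R (C * (b - a))" for x
    proof (cases "x \<in> S")
      case True
      then have "\<bar>x - c\<bar> \<le> b - a" using S(3) c by (auto simp: abs_le_iff)
      then show ?thesis
        using True lipschitz[of x c] mult_left_mono[OF _ \<open>C \<ge> 0\<close>] by fastforce
    qed simp
  qed
  also have "\<dots> = measure lborel S * (C * (b - a))"
    using S(1) S_finite by (subst set_integral_const) auto
  also have "\<dots> = C * (b - a)\<^sup>2"
    by (simp add: S_measure power2_eq_square)
  finally show ?thesis .
qed

lemma cond_risk_taylor:
  fixes g :: "real \<Rightarrow> real"
  assumes y: "y \<in> {1, -1}" and g: "integrable lborel g"
    and lipschitz: "\<And>u v. \<bar>g u - g v\<bar> \<le> C * \<bar>u - v\<bar>"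
  shows "\<bar>cond_risk y g b - cond_risk y g a - y * (b - a) * g a\<bar> \<le> C * (b - a)\<^sup>2"
proof -
  let ?r = "cond_risk y g b - cond_risk y g a - y * (b - a) * g a"
  \<comment> \<open>In each case the increment is, up to sign, the integral of g between a and b.\<close>
  have approx: "\<bar>?r\<bar> \<le> C * (b - a)\<^sup>2"
    if "?r = s * ((LINT x:S|lborel. g x) - (v - u) * g a)" "\<bar>s\<bar> = 1"
      "S \<in> sets borel" "{u<..<v} \<subseteq> S" "S \<subseteq> {u..v}" "{u, v} = {a, b}" "a \<in> {u..v}"
    for s S u v
  proof -
    have "(v - u)\<^sup>2 = (b - a)\<^sup>2"
      using that(6) by (auto simp: doubleton_eq_iff power2_commute)
    then show ?thesis
      using set_integral_interval_approx[OF that(3-5,7) g lipschitz] that(1,2) by (simp add: abs_mult)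
  qed
  consider "y = 1" "a \<le> b" | "y = 1" "b \<le> a" | "y = -1" "a \<le> b" | "y = -1" "b \<le> a"
    using y by force
  then show ?thesis
  proof cases
    case 1
    then have "?r = 1 * ((LINT x:{a..<b}|lborel. g x) - (b - a) * g a)"
      using set_integral_lessThan_split[OF g, of a b] by (simp add: cond_risk_pos)
    from approx[OF this] 1 show ?thesis by (auto simp: subset_eq)
  next
    case 2
    then have "?r = -1 * ((LINT x:{b..<a}|lborel. g x) - (a - b) * g a)"
      using set_integral_lessThan_split[OF g, of b a] by (simp add: cond_risk_pos algebra_simps)
    from approx[OF this] 2 show ?thesis by (auto simp: subset_eq)
  next
    case 3
    then have "?r = -1 * ((LINT x:{a<..b}|lborel. g x) - (b - a) * g a)"
      using set_integral_greaterThan_split[OF g, of a b] by (simp add: cond_risk_neg algebra_simps)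
    from approx[OF this] 3 show ?thesis by (auto simp: subset_eq)
  next
    case 4
    then have "?r = 1 * ((LINT x:{b<..a}|lborel. g x) - (a - b) * g a)"
      using set_integral_greaterThan_split[OF g, of b a] by (simp add: cond_risk_neg algebra_simps)
    from approx[OF this] 4 show ?thesis by (auto simp: subset_eq)
  qed
qed

section \<open>Linear predictors and moments of the covariates\<close>

abbreviation borel_Rd :: "nat \<Rightarrow> (nat \<Rightarrow> real) measure" where
  "borel_Rd d \<equiv> PiM {..<d} (\<lambda>_. borel)"

definition dot :: "nat \<Rightarrow> (nat \<Rightarrow> real) \<Rightarrow> (nat \<Rightarrow> real) \<Rightarrow> real" where
  "dot d \<beta> z = (\<Sum>i<d. \<beta> i * z i)"

lemma dot_measurable [measurable]: "dot d \<beta> \<in> borel_measurable (borel_Rd d)"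
  unfolding dot_def by measurable

lemma dot_update:
  assumes "j < d"
  shows "dot d (\<beta>(j := \<beta> j + t)) z = dot d \<beta> z + t * z j"
proof -
  have "dot d (\<beta>(j := \<beta> j + t)) z = (\<Sum>i<d. \<beta> i * z i + (if i = j then t * z j else 0))"
    unfolding dot_def by (intro sum.cong) (auto simp: algebra_simps)
  also have "\<dots> = dot d \<beta> z + t * z j"
    using assms by (simp add: sum.distrib dot_def)
  finally show ?thesis .
qed

lemma abs_dot_diff_le: "\<bar>dot d a z - dot d b z\<bar> \<le> (\<Sum>i<d. \<bar>a i - b i\<bar> * \<bar>z i\<bar>)"
proof -
  have "dot d a z - dot d b z = (\<Sum>i<d. (a i - b i) * z i)"
    unfolding dot_def by (simp add: sum_subtractf algebra_simps)
  also have "\<bar>\<dots>\<bar> \<le> (\<Sum>i<d. \<bar>(a i - b i) * z i\<bar>)"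
    by (rule sum_abs)
  finally show ?thesis by (simp add: abs_mult)
qed

lemma borel_measurable_compose_graph:
  assumes "(\<lambda>(x, z). F x z) \<in> borel_measurable (lborel \<Otimes>\<^sub>M N)" and "h \<in> borel_measurable N"
  shows "(\<lambda>z. F (h z) z) \<in> borel_measurable N"
proof -
  have "(\<lambda>z. (h z, z)) \<in> measurable N (lborel \<Otimes>\<^sub>M N)"
    using assms(2) by measurable
  from measurable_compose[OF this assms(1)] show ?thesis by simp
qed

lemma L01_measurable [measurable]: "L01 \<in> borel_measurable borel"
  unfolding L01_def sign01_def by measurable

lemma cond_risk_measurable:
  assumes F: "(\<lambda>(x, z). F x z) \<in> borel_measurable (lborel \<Otimes>\<^sub>M N)" and h: "h \<in> borel_measurable N"
  shows "(\<lambda>z. cond_risk y (\<lambda>x. F x z) (h z)) \<in> borel_measurable N"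
proof -
  have "(\<lambda>(z, x). F x z) \<in> borel_measurable (N \<Otimes>\<^sub>M lborel)"
    using measurable_compose[OF measurable_pair_swap' F] by (simp add: case_prod_beta')
  then have "(\<lambda>(z, x). L01 (y * (x - h z)) * F x z) \<in> borel_measurable (N \<Otimes>\<^sub>M lborel)"
    using h by measurable
  then show ?thesis
    unfolding cond_risk_def
    by (rule lborel.borel_measurable_lebesgue_integral[of "\<lambda>z x. L01 (y * (x - h z)) * F x z", simplified])
qed

lemma borel_measurable_partial_deriv:
  assumes F: "(\<lambda>(x, z). F x z) \<in> borel_measurable (lborel \<Otimes>\<^sub>M N)"
    and F': "\<And>x z. ((\<lambda>x. F x z) has_real_derivative F' x z) (at x)"
  shows "(\<lambda>(x, z). F' x z) \<in> borel_measurable (lborel \<Otimes>\<^sub>M N)"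
proof (rule borel_measurable_LIMSEQ_real)
  let ?q = "\<lambda>i (x, z). (F (x + 1 / real (Suc i)) z - F x z) / (1 / real (Suc i))"
  show "(\<lambda>i. ?q i xz) \<longlonglongrightarrow> (\<lambda>(x, z). F' x z) xz" for xz
  proof (cases xz)
    case (Pair x z)
    have "((\<lambda>h. (F (x + h) z - F x z) / h) \<longlongrightarrow> F' x z) (at 0)"
      using F'[of z x] unfolding DERIV_def by simp
    moreover have "filterlim (\<lambda>i. 1 / real (Suc i)) (at 0) sequentially"
      unfolding filterlim_at using LIMSEQ_inverse_real_of_nat by (auto simp: inverse_eq_divide)
    ultimately show ?thesis using filterlim_compose Pair by fastforce
  qed
  show "?q i \<in> borel_measurable (lborel \<Otimes>\<^sub>M N)" for i
  proof -
    have "(\<lambda>(x, z). (x + 1 / real (Suc i), z)) \<in> measurable (lborel \<Otimes>\<^sub>M N) (lborel \<Otimes>\<^sub>M N)"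
      by measurable
    from measurable_compose[OF this F]
    have "(\<lambda>(x, z). F (x + 1 / real (Suc i)) z) \<in> borel_measurable (lborel \<Otimes>\<^sub>M N)"
      by (simp add: case_prod_beta')
    then show ?thesis using F by measurable
  qed
qed

lemma abs_mult_le_fourth_powers: "\<bar>a * b\<bar> * 4 \<le> a ^ 4 + b ^ 4 + (2::real)"
proof -
  have "\<bar>a * b\<bar> * 2 \<le> a\<^sup>2 + b\<^sup>2"
    using sum_squares_bound[of "\<bar>a\<bar>" "\<bar>b\<bar>"] by (simp add: abs_mult power2_eq_square)
  moreover have "a\<^sup>2 * 2 \<le> a ^ 4 + 1" "b\<^sup>2 * 2 \<le> b ^ 4 + 1"
    using sum_squares_bound[of "a\<^sup>2" 1] sum_squares_bound[of "b\<^sup>2" 1]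
    by (simp_all add: power2_eq_square power4_eq_xxxx)
  ultimately show ?thesis by linarith
qed

lemma integral_abs_coord_prod_le:
  assumes M: "prob_space M" "sets M = sets (borel_Rd d)"
    and coord_bound: "AE z in M. \<forall>j<d. \<bar>z j\<bar> \<le> Mn"
    and fourth_moment: "\<forall>j<d. (\<integral>z. (z j) ^ 4 \<partial>M) \<le> B"
    and i: "i < d" and j: "j < d"
  shows "integrable M (\<lambda>z. \<bar>z i * z j\<bar>)"
    and "(\<integral>z. \<bar>z i * z j\<bar> \<partial>M) \<le> Mn\<^sup>2"
    and "(\<integral>z. \<bar>z i * z j\<bar> \<partial>M) \<le> (B + 1) / 2"
proof -
  interpret prob_space M by (rule M(1))
  have coord_measurable: "(\<lambda>z. z k) \<in> borel_measurable M" if "k < d" for k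
    using that measurable_cong_sets[OF M(2) refl] by (auto intro: measurable_component_singleton)
  have integrable_fourth: "integrable M (\<lambda>z. (z k) ^ 4)" if k: "k < d" for k
  proof (rule integrable_const_bound[where B = "Mn ^ 4"])
    show "AE z in M. norm ((z k) ^ 4) \<le> Mn ^ 4"
      using coord_bound
    proof eventually_elim
      case (elim z)
      then have "\<bar>z k\<bar> \<le> Mn" using k by auto
      then show ?case using power_mono[OF _ abs_ge_zero, of "z k" Mn 4] by (simp add: power_abs)
    qed
  qed (use coord_measurable[OF k] in measurable)
  have prod_bound: "AE z in M. \<bar>z i * z j\<bar> \<le> Mn\<^sup>2"
    using coord_bound
  proof eventually_elim
    case (elim z)
    then have "\<bar>z i\<bar> \<le> Mn" "\<bar>z j\<bar> \<le> Mn" using i j by auto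
    then show ?case by (simp add: abs_mult power2_eq_square mult_mono')
  qed
  show integrable: "integrable M (\<lambda>z. \<bar>z i * z j\<bar>)"
    using prod_bound coord_measurable[OF i] coord_measurable[OF j]
    by (intro integrable_const_bound[where B = "Mn\<^sup>2"]) auto
  show "(\<integral>z. \<bar>z i * z j\<bar> \<partial>M) \<le> Mn\<^sup>2"
    using integral_mono_AE[OF integrable _ prod_bound] by (simp add: prob_space)
  have "(\<integral>z. \<bar>z i * z j\<bar> \<partial>M) \<le> (\<integral>z. ((z i) ^ 4 + (z j) ^ 4 + 2) / 4 \<partial>M)"
    using integrable integrable_fourth[OF i] integrable_fourth[OF j] abs_mult_le_fourth_powers
    by (intro integral_mono) auto
  also have "\<dots> = ((\<integral>z. (z i) ^ 4 \<partial>M) + (\<integral>z. (z j) ^ 4 \<partial>M) + 2) / 4"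
    using integrable_fourth[OF i] integrable_fourth[OF j] by (simp add: prob_space)
  also have "\<dots> \<le> (B + 1) / 2"
    using fourth_moment[rule_format, OF i] fourth_moment[rule_format, OF j] by simp
  finally show "(\<integral>z. \<bar>z i * z j\<bar> \<partial>M) \<le> (B + 1) / 2" .
qed

section \<open>Gradient and Hessian of the risk\<close>

definition mix :: "real \<Rightarrow> (real \<Rightarrow> real) \<Rightarrow> (real \<Rightarrow> real) \<Rightarrow> real" where
  "mix p w X = (\<Sum>y\<in>{1, -1::real}. (if y = 1 then p else 1 - p) * w y * X y)"

lemma risk_eq_mix: "risk d p w Q f \<beta> = mix p w (\<lambda>y. \<integral>z. cond_risk y (\<lambda>x. f x y z) (dot d \<beta> z) \<partial>Q y)"
  unfolding risk_def mix_def cond_risk_def dot_def ..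

lemma has_real_derivative_mix:
  assumes "\<And>y. y \<in> {1, -1} \<Longrightarrow> (F y has_real_derivative D y) (at x)"
  shows "((\<lambda>t. mix p w (\<lambda>y. F y t)) has_real_derivative mix p w D) (at x)"
  unfolding mix_def using assms by (intro DERIV_sum DERIV_cmult) auto

lemma mix_diff: "mix p w X - mix p w X' = mix p w (\<lambda>y. X y - X' y)"
  unfolding mix_def by (simp add: algebra_simps)

lemma abs_mix_le:
  assumes p: "0 \<le> p" "p \<le> 1"
    and w: "\<And>y. y \<in> {1, -1} \<Longrightarrow> 0 \<le> w y \<and> w y \<le> W"
    and X: "\<And>y. y \<in> {1, -1} \<Longrightarrow> \<bar>X y\<bar> \<le> T"
  shows "\<bar>mix p w X\<bar> \<le> W * T"
proof -
  have "\<bar>w y * X y\<bar> \<le> W * T" if "y \<in> {1, -1}" for y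
    using w[OF that] X[OF that] by (auto simp: abs_mult intro: mult_mono)
  then have "\<bar>p * (w 1 * X 1) + (1 - p) * (w (-1) * X (-1))\<bar> \<le> p * (W * T) + (1 - p) * (W * T)"
    using p by (intro order_trans[OF abs_triangle_ineq] add_mono) (auto simp: abs_mult intro: mult_left_mono)
  then show ?thesis by (simp add: mix_def algebra_simps)
qed

lemma smooth_order_second_order:
  assumes smooth: "smooth_order l C L \<zeta> f" and l: "2 \<le> l" and y: "y \<in> {1, -1}"
  shows "((\<lambda>x. f x y z) has_real_derivative deriv (\<lambda>x. f x y z) x) (at x)"
    and "(deriv (\<lambda>x. f x y z) has_real_derivative (deriv ^^ 2) (\<lambda>x. f x y z) x) (at x)"
    and "\<bar>f x y z\<bar> \<le> C" and "\<bar>deriv (\<lambda>x. f x y z) x\<bar> \<le> C"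
    and "\<bar>(deriv ^^ 2) (\<lambda>x. f x y z) x\<bar> \<le> C"
proof -
  have deriv: "\<forall>i<l. \<forall>x. ((deriv ^^ i) (\<lambda>x. f x y z) has_real_derivative (deriv ^^ Suc i) (\<lambda>x. f x y z) x) (at x)"
    and bound: "\<forall>i\<le>l. \<forall>x. \<bar>(deriv ^^ i) (\<lambda>x. f x y z) x\<bar> \<le> C"
    using smooth y unfolding smooth_order_def by blast+
  show "((\<lambda>x. f x y z) has_real_derivative deriv (\<lambda>x. f x y z) x) (at x)"
    using deriv[rule_format, of 0 x] l by simp
  show "(deriv (\<lambda>x. f x y z) has_real_derivative (deriv ^^ 2) (\<lambda>x. f x y z) x) (at x)"
    using deriv[rule_format, of 1 x] l by (simp add: numeral_2_eq_2)
  show "\<bar>f x y z\<bar> \<le> C" "\<bar>deriv (\<lambda>x. f x y z) x\<bar> \<le> C" "\<bar>(deriv ^^ 2) (\<lambda>x. f x y z) x\<bar> \<le> C"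
    using bound[rule_format, of 0 x] bound[rule_format, of 1 x] bound[rule_format, of 2 x] l by simp_all
qed

lemma le_mult_max_of_le_square:
  fixes m x c :: real
  assumes "0 \<le> m" "x \<le> m\<^sup>2" "x \<le> c"
  shows "x \<le> m * max 1 c"
proof (cases "m \<le> 1")
  case True
  then have "m\<^sup>2 \<le> m * 1" using assms(1) by (simp add: power2_eq_square mult_left_le_one_le)
  also have "\<dots> \<le> m * max 1 c" using assms(1) by (intro mult_left_mono) auto
  finally show ?thesis using assms(2) by linarith
next
  case False
  then have "max 1 c \<le> m * max 1 c" by (simp add: mult_le_cancel_right1)
  then show ?thesis using assms(3) by linarith
qed

locale binary_risk_model =
  fixes d :: nat and Q :: "real \<Rightarrow> (nat \<Rightarrow> real) measure"
    and f f' :: "real \<Rightarrow> real \<Rightarrow> (nat \<Rightarrow> real) \<Rightarrow> real" and C Mn :: real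
  assumes prob_space_Q: "y \<in> {1, -1} \<Longrightarrow> prob_space (Q y)"
    and sets_Q: "y \<in> {1, -1} \<Longrightarrow> sets (Q y) = sets (borel_Rd d)"
    and density: "cond_density d f"
    and f_deriv: "y \<in> {1, -1} \<Longrightarrow> ((\<lambda>x. f x y z) has_real_derivative f' y x z) (at x)"
    and f'_lipschitz: "y \<in> {1, -1} \<Longrightarrow> \<bar>f' y u z - f' y v z\<bar> \<le> C * \<bar>u - v\<bar>"
    and f_bound: "y \<in> {1, -1} \<Longrightarrow> \<bar>f x y z\<bar> \<le> C"
    and f'_bound: "y \<in> {1, -1} \<Longrightarrow> \<bar>f' y x z\<bar> \<le> C"
    and coord_bound: "y \<in> {1, -1} \<Longrightarrow> AE z in Q y. \<forall>j<d. \<bar>z j\<bar> \<le> Mn"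
begin

lemma C_nonneg: "0 \<le> C"
  using f_bound[of 1] by (meson abs_ge_zero insertI1 order_trans)

lemma f_lipschitz: "y \<in> {1, -1} \<Longrightarrow> \<bar>f u y z - f v y z\<bar> \<le> C * \<bar>u - v\<bar>"
  by (rule abs_diff_le_of_deriv_bound[OF f_deriv f'_bound])

lemma f_measurable: "y \<in> {1, -1} \<Longrightarrow> (\<lambda>(x, z). f x y z) \<in> borel_measurable (lborel \<Otimes>\<^sub>M borel_Rd d)"
  using density unfolding cond_density_def by auto

lemma f_integrable: "y \<in> {1, -1} \<Longrightarrow> integrable lborel (\<lambda>x. f x y z)"
  using density unfolding cond_density_def by auto

lemma f'_measurable: "y \<in> {1, -1} \<Longrightarrow> (\<lambda>(x, z). f' y x z) \<in> borel_measurable (lborel \<Otimes>\<^sub>M borel_Rd d)"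
  by (rule borel_measurable_partial_deriv[OF f_measurable f_deriv])

lemma coord_measurable [measurable]: "j < d \<Longrightarrow> (\<lambda>z. z j) \<in> borel_measurable (borel_Rd d)"
  by (auto intro: measurable_component_singleton)

lemma Mn_nonneg:
  assumes "0 < d"
  shows "0 \<le> Mn"
proof -
  interpret prob_space "Q 1" by (rule prob_space_Q) simp
  have "AE z in Q 1. \<forall>j<d. \<bar>z j\<bar> \<le> Mn"
    by (rule coord_bound) simp
  then have "AE z in Q 1. 0 \<le> Mn"
    by eventually_elim (use assms in force)
  then show ?thesis by simp
qed

lemma integrable_Q_bounded:
  fixes g :: "(nat \<Rightarrow> real) \<Rightarrow> real"
  assumes y: "y \<in> {1, -1}" and g: "g \<in> borel_measurable (borel_Rd d)"
    and bound: "AE z in Q y. \<bar>g z\<bar> \<le> K"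
  shows "integrable (Q y) g"
proof -
  interpret prob_space "Q y" using y by (rule prob_space_Q)
  show ?thesis
    using g bound measurable_cong_sets[OF sets_Q[OF y] refl]
    by (intro integrable_const_bound[where B = K]) auto
qed

definition grad_term :: "real \<Rightarrow> (nat \<Rightarrow> real) \<Rightarrow> nat \<Rightarrow> real" where
  "grad_term y \<beta> j = (\<integral>z. y * z j * f (dot d \<beta> z) y z \<partial>Q y)"

definition hess_term :: "real \<Rightarrow> (nat \<Rightarrow> real) \<Rightarrow> nat \<Rightarrow> nat \<Rightarrow> real" where
  "hess_term y \<beta> j k = (\<integral>z. y * z j * z k * f' y (dot d \<beta> z) z \<partial>Q y)"

lemma integrable_grad_integrand:
  assumes y: "y \<in> {1, -1}" and j: "j < d"
  shows "integrable (Q y) (\<lambda>z. y * z j * f (dot d \<beta> z) y z)"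
proof (rule integrable_Q_bounded[OF y, where K = "Mn * C"])
  show "(\<lambda>z. y * z j * f (dot d \<beta> z) y z) \<in> borel_measurable (borel_Rd d)"
    using borel_measurable_compose_graph[OF f_measurable[OF y] dot_measurable] j by measurable
  show "AE z in Q y. \<bar>y * z j * f (dot d \<beta> z) y z\<bar> \<le> Mn * C"
    using coord_bound[OF y]
  proof eventually_elim
    case (elim z)
    then have "\<bar>z j\<bar> \<le> Mn" using j by auto
    then show ?case
      using y f_bound[OF y] C_nonneg by (auto simp: abs_mult intro: mult_mono)
  qed
qed

lemma integrable_hess_integrand:
  assumes y: "y \<in> {1, -1}" and j: "j < d" and k: "k < d"
  shows "integrable (Q y) (\<lambda>z. y * z j * z k * f' y (dot d \<beta> z) z)"
proof (rule integrable_Q_bounded[OF y, where K = "Mn * Mn * C"])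
  show "(\<lambda>z. y * z j * z k * f' y (dot d \<beta> z) z) \<in> borel_measurable (borel_Rd d)"
    using borel_measurable_compose_graph[OF f'_measurable[OF y] dot_measurable] j k by measurable
  show "AE z in Q y. \<bar>y * z j * z k * f' y (dot d \<beta> z) z\<bar> \<le> Mn * Mn * C"
    using coord_bound[OF y]
  proof eventually_elim
    case (elim z)
    then have "\<bar>z j\<bar> \<le> Mn" "\<bar>z k\<bar> \<le> Mn" using j k by auto
    then show ?case
      using y f'_bound[OF y] C_nonneg by (auto simp: abs_mult intro!: mult_mono)
  qed
qed

lemma has_real_derivative_risk_term:
  assumes y: "y \<in> {1, -1}" and j: "j < d"
  shows "((\<lambda>t. \<integral>z. cond_risk y (\<lambda>x. f x y z) (dot d (\<beta>(j := \<beta> j + t)) z) \<partial>Q y)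
          has_real_derivative grad_term y \<beta> j) (at 0)"
proof -
  define A where "A t z = cond_risk y (\<lambda>x. f x y z) (dot d \<beta> z + t * z j)" for t z
  have "((\<lambda>t. \<integral>z. A t z \<partial>Q y) has_real_derivative grad_term y \<beta> j) (at 0)"
    unfolding grad_term_def
  proof (rule has_real_derivative_integral_of_quadratic_remainder[where K = "C * Mn\<^sup>2"])
    show "finite_measure (Q y)"
      using prob_space_Q[OF y] by (simp add: prob_space_def)
    show "integrable (Q y) (A t)" for t
    proof (rule integrable_Q_bounded[OF y, where K = 1])
      show "A t \<in> borel_measurable (borel_Rd d)"
        unfolding A_def using j by (intro cond_risk_measurable[OF f_measurable[OF y]]) measurable
      show "AE z in Q y. \<bar>A t z\<bar> \<le> 1"
        unfolding A_def using density y by (auto simp: cond_density_def intro!: abs_cond_risk_le_1)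
    qed
    show "integrable (Q y) (\<lambda>z. y * z j * f (dot d \<beta> z) y z)"
      by (rule integrable_grad_integrand[OF y j])
    show "AE z in Q y. \<bar>A t z - A 0 z - t * (y * z j * f (dot d \<beta> z) y z)\<bar> \<le> C * Mn\<^sup>2 * t\<^sup>2" for t
      using coord_bound[OF y]
    proof eventually_elim
      case (elim z)
      then have "(z j)\<^sup>2 \<le> Mn\<^sup>2"
        using j by (auto simp flip: abs_le_square_iff intro: order_trans)
      have "\<bar>A t z - A 0 z - t * (y * z j * f (dot d \<beta> z) y z)\<bar> \<le> C * (t * z j)\<^sup>2"
        using cond_risk_taylor[OF y f_integrable[OF y] f_lipschitz[OF y],
          where b = "dot d \<beta> z + t * z j" and a = "dot d \<beta> z"]
        by (simp add: A_def algebra_simps)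
      also have "\<dots> \<le> C * Mn\<^sup>2 * t\<^sup>2"
        using mult_left_mono[OF \<open>(z j)\<^sup>2 \<le> Mn\<^sup>2\<close>, of "C * t\<^sup>2"] C_nonneg
        by (simp add: power_mult_distrib mult_ac)
      finally show ?case .
    qed
  qed
  then show ?thesis by (simp add: A_def dot_update[OF j])
qed

lemma gradR_eq:
  assumes "j < d"
  shows "gradR d p w Q f \<beta> j = mix p w (\<lambda>y. grad_term y \<beta> j)"
proof -
  have "((\<lambda>t. risk d p w Q f (\<beta>(j := \<beta> j + t))) has_real_derivative mix p w (\<lambda>y. grad_term y \<beta> j)) (at 0)"
    unfolding risk_eq_mix by (intro has_real_derivative_mix has_real_derivative_risk_term assms)
  then show ?thesis unfolding gradR_def by (rule DERIV_imp_deriv)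
qed

lemma has_real_derivative_grad_term:
  assumes y: "y \<in> {1, -1}" and j: "j < d" and k: "k < d"
  shows "((\<lambda>t. grad_term y (\<beta>(k := \<beta> k + t)) j) has_real_derivative hess_term y \<beta> j k) (at 0)"
proof -
  define A where "A t z = y * z j * f (dot d \<beta> z + t * z k) y z" for t z
  have "((\<lambda>t. \<integral>z. A t z \<partial>Q y) has_real_derivative hess_term y \<beta> j k) (at 0)"
    unfolding hess_term_def
  proof (rule has_real_derivative_integral_of_quadratic_remainder[where K = "Mn * C * Mn\<^sup>2"])
    show "finite_measure (Q y)"
      using prob_space_Q[OF y] by (simp add: prob_space_def)
    show "integrable (Q y) (A t)" for t
      using integrable_grad_integrand[OF y j, of "\<beta>(k := \<beta> k + t)"] by (simp add: A_def[abs_def] dot_update[OF k])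
    show "integrable (Q y) (\<lambda>z. y * z j * z k * f' y (dot d \<beta> z) z)"
      by (rule integrable_hess_integrand[OF y j k])
    show "AE z in Q y. \<bar>A t z - A 0 z - t * (y * z j * z k * f' y (dot d \<beta> z) z)\<bar> \<le> Mn * C * Mn\<^sup>2 * t\<^sup>2" for t
      using coord_bound[OF y]
    proof eventually_elim
      case (elim z)
      then have zj: "\<bar>z j\<bar> \<le> Mn" and zk: "(z k)\<^sup>2 \<le> Mn\<^sup>2"
        using j k by (auto simp flip: abs_le_square_iff intro: order_trans)
      let ?a = "dot d \<beta> z"
      have "A t z - A 0 z - t * (y * z j * z k * f' y ?a z)
          = y * z j * (f (?a + t * z k) y z - f ?a y z - t * z k * f' y ?a z)"
        by (simp add: A_def algebra_simps)
      then have "\<bar>A t z - A 0 z - t * (y * z j * z k * f' y ?a z)\<bar>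
          = \<bar>z j\<bar> * \<bar>f (?a + t * z k) y z - f ?a y z - t * z k * f' y ?a z\<bar>"
        using y by (auto simp: abs_mult)
      also have "\<dots> \<le> Mn * (C * (t * z k)\<^sup>2)"
        using taylor_remainder_le[OF f_deriv[OF y] f'_lipschitz[OF y], where a = ?a and h = "t * z k"] zj
        by (intro mult_mono) auto
      also have "\<dots> \<le> Mn * (C * (t\<^sup>2 * Mn\<^sup>2))"
        using zk zj C_nonneg by (auto simp: power_mult_distrib intro!: mult_left_mono)
      finally show ?case by (simp add: mult_ac)
    qed
  qed
  then show ?thesis by (simp add: A_def grad_term_def dot_update[OF k])
qed

lemma hessR_eq:
  assumes "j < d" "k < d"
  shows "hessR d p w Q f \<beta> j k = mix p w (\<lambda>y. hess_term y \<beta> j k)"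
proof -
  have "((\<lambda>t. gradR d p w Q f (\<beta>(k := \<beta> k + t)) j) has_real_derivative mix p w (\<lambda>y. hess_term y \<beta> j k)) (at 0)"
    unfolding gradR_eq[OF assms(1)] by (intro has_real_derivative_mix has_real_derivative_grad_term assms)
  then show ?thesis unfolding hessR_def by (rule DERIV_imp_deriv)
qed

lemma grad_term_diff_le:
  assumes y: "y \<in> {1, -1}" and j: "j < d"
    and fourth_moment: "\<forall>i<d. (\<integral>z. (z i) ^ 4 \<partial>Q y) \<le> B"
  shows "\<bar>grad_term y \<beta>h j - grad_term y \<beta>s j\<bar>
         \<le> C * Mn * max 1 ((B + 1) / 2) * (\<Sum>i<d. \<bar>\<beta>h i - \<beta>s i\<bar>)"
proof -
  note moments = integral_abs_coord_prod_le[OF prob_space_Q[OF y] sets_Q[OF y] coord_bound[OF y] fourth_moment j]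
  have "0 \<le> Mn" using Mn_nonneg j by simp
  define U where "U z = (\<Sum>i<d. C * \<bar>\<beta>h i - \<beta>s i\<bar> * \<bar>z j * z i\<bar>)" for z
  have "\<bar>grad_term y \<beta>h j - grad_term y \<beta>s j\<bar> \<le> (\<integral>z. U z \<partial>Q y)"
    unfolding grad_term_def
  proof (rule abs_integral_diff_le_AE[OF integrable_grad_integrand[OF y j] integrable_grad_integrand[OF y j]])
    show "integrable (Q y) U"
      unfolding U_def using moments(1) by (auto intro!: Bochner_Integration.integrable_sum)
    show "AE z in Q y. \<bar>y * z j * f (dot d \<beta>h z) y z - y * z j * f (dot d \<beta>s z) y z\<bar> \<le> U z"
    proof (rule AE_I2)
      fix z
      have "\<bar>y * z j * f (dot d \<beta>h z) y z - y * z j * f (dot d \<beta>s z) y z\<bar>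
          = \<bar>z j\<bar> * \<bar>f (dot d \<beta>h z) y z - f (dot d \<beta>s z) y z\<bar>"
        using y by (auto simp: abs_mult simp flip: right_diff_distrib)
      also have "\<dots> \<le> \<bar>z j\<bar> * (C * (\<Sum>i<d. \<bar>\<beta>h i - \<beta>s i\<bar> * \<bar>z i\<bar>))"
        using order_trans[OF f_lipschitz[OF y] mult_left_mono[OF abs_dot_diff_le C_nonneg]]
        by (intro mult_left_mono) auto
      also have "\<dots> = U z"
        unfolding U_def by (simp add: sum_distrib_left abs_mult mult_ac)
      finally show "\<bar>y * z j * f (dot d \<beta>h z) y z - y * z j * f (dot d \<beta>s z) y z\<bar> \<le> U z" .
    qed
  qed
  also have "(\<integral>z. U z \<partial>Q y) = (\<Sum>i<d. C * \<bar>\<beta>h i - \<beta>s i\<bar> * (\<integral>z. \<bar>z j * z i\<bar> \<partial>Q y))"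
    unfolding U_def using moments(1) by (subst Bochner_Integration.integral_sum) auto
  also have "\<dots> \<le> (\<Sum>i<d. C * \<bar>\<beta>h i - \<beta>s i\<bar> * (Mn * max 1 ((B + 1) / 2)))"
    using moments(2,3) \<open>0 \<le> Mn\<close> C_nonneg
    by (intro sum_mono mult_left_mono le_mult_max_of_le_square) auto
  also have "\<dots> = C * Mn * max 1 ((B + 1) / 2) * (\<Sum>i<d. \<bar>\<beta>h i - \<beta>s i\<bar>)"
    by (simp add: sum_distrib_left mult_ac)
  finally show ?thesis .
qed

lemma hess_term_diff_le:
  assumes y: "y \<in> {1, -1}" and j: "j < d" and k: "k < d"
    and fourth_moment: "\<forall>i<d. (\<integral>z. (z i) ^ 4 \<partial>Q y) \<le> B"
  shows "\<bar>hess_term y \<beta>h j k - hess_term y \<beta>s j k\<bar>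
         \<le> C * Mn * max 1 ((B + 1) / 2) * (\<Sum>i<d. \<bar>\<beta>h i - \<beta>s i\<bar>)"
proof -
  note moments = integral_abs_coord_prod_le[OF prob_space_Q[OF y] sets_Q[OF y] coord_bound[OF y] fourth_moment j k]
  have "0 \<le> Mn" using Mn_nonneg j by simp
  define S where "S = (\<Sum>i<d. \<bar>\<beta>h i - \<beta>s i\<bar>)"
  have "0 \<le> S" unfolding S_def by (simp add: sum_nonneg)
  have "\<bar>hess_term y \<beta>h j k - hess_term y \<beta>s j k\<bar> \<le> (\<integral>z. C * Mn * S * \<bar>z j * z k\<bar> \<partial>Q y)"
    unfolding hess_term_def
  proof (rule abs_integral_diff_le_AE[OF integrable_hess_integrand[OF y j k] integrable_hess_integrand[OF y j k]])
    show "integrable (Q y) (\<lambda>z. C * Mn * S * \<bar>z j * z k\<bar>)"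
      using moments(1) by simp
    show "AE z in Q y. \<bar>y * z j * z k * f' y (dot d \<beta>h z) z - y * z j * z k * f' y (dot d \<beta>s z) z\<bar>
        \<le> C * Mn * S * \<bar>z j * z k\<bar>"
      using coord_bound[OF y]
    proof eventually_elim
      case (elim z)
      have "\<bar>dot d \<beta>h z - dot d \<beta>s z\<bar> \<le> (\<Sum>i<d. \<bar>\<beta>h i - \<beta>s i\<bar> * Mn)"
        using elim by (intro order_trans[OF abs_dot_diff_le] sum_mono mult_left_mono) auto
      also have "\<dots> = Mn * S"
        unfolding S_def by (simp add: sum_distrib_left mult.commute)
      finally have "\<bar>f' y (dot d \<beta>h z) z - f' y (dot d \<beta>s z) z\<bar> \<le> C * (Mn * S)"
        using order_trans[OF f'_lipschitz[OF y] mult_left_mono[OF _ C_nonneg]] by blast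
      then have "\<bar>z j * z k\<bar> * \<bar>f' y (dot d \<beta>h z) z - f' y (dot d \<beta>s z) z\<bar> \<le> \<bar>z j * z k\<bar> * (C * (Mn * S))"
        by (intro mult_left_mono) auto
      moreover have "\<bar>y * z j * z k * f' y (dot d \<beta>h z) z - y * z j * z k * f' y (dot d \<beta>s z) z\<bar>
          = \<bar>z j * z k\<bar> * \<bar>f' y (dot d \<beta>h z) z - f' y (dot d \<beta>s z) z\<bar>"
        using y by (auto simp: abs_mult simp flip: right_diff_distrib)
      ultimately show ?case by (simp add: mult_ac)
    qed
  qed
  also have "\<dots> = C * Mn * S * (\<integral>z. \<bar>z j * z k\<bar> \<partial>Q y)"
    by simp
  also have "\<dots> \<le> C * Mn * S * max 1 ((B + 1) / 2)"
    using moments(3) \<open>0 \<le> Mn\<close> \<open>0 \<le> S\<close> C_nonneg by (intro mult_left_mono) (auto simp: le_max_iff_disj)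
  finally show ?thesis unfolding S_def by (simp add: mult_ac)
qed

lemma gradR_lipschitz:
  assumes p: "0 \<le> p" "p \<le> 1"
    and w: "\<And>y. y \<in> {1, -1} \<Longrightarrow> 0 \<le> w y \<and> w y \<le> W"
    and fourth_moment: "\<And>y. y \<in> {1, -1} \<Longrightarrow> \<forall>i<d. (\<integral>z. (z i) ^ 4 \<partial>Q y) \<le> B"
    and j: "j < d"
  shows "\<bar>gradR d p w Q f \<beta>h j - gradR d p w Q f \<beta>s j\<bar>
         \<le> W * C * max 1 ((B + 1) / 2) * Mn * (\<Sum>i<d. \<bar>\<beta>h i - \<beta>s i\<bar>)"
proof -
  have "\<bar>mix p w (\<lambda>y. grad_term y \<beta>h j - grad_term y \<beta>s j)\<bar>
      \<le> W * (C * Mn * max 1 ((B + 1) / 2) * (\<Sum>i<d. \<bar>\<beta>h i - \<beta>s i\<bar>))"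
    using p w grad_term_diff_le[OF _ j fourth_moment] by (intro abs_mix_le) blast+
  then show ?thesis
    by (simp add: gradR_eq[OF j] mix_diff mult_ac)
qed

lemma hessR_lipschitz:
  assumes p: "0 \<le> p" "p \<le> 1"
    and w: "\<And>y. y \<in> {1, -1} \<Longrightarrow> 0 \<le> w y \<and> w y \<le> W"
    and fourth_moment: "\<And>y. y \<in> {1, -1} \<Longrightarrow> \<forall>i<d. (\<integral>z. (z i) ^ 4 \<partial>Q y) \<le> B"
    and j: "j < d" and k: "k < d"
  shows "\<bar>hessR d p w Q f \<beta>h j k - hessR d p w Q f \<beta>s j k\<bar>
         \<le> W * C * max 1 ((B + 1) / 2) * Mn * (\<Sum>i<d. \<bar>\<beta>h i - \<beta>s i\<bar>)"
proof -
  have "\<bar>mix p w (\<lambda>y. hess_term y \<beta>h j k - hess_term y \<beta>s j k)\<bar>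
      \<le> W * (C * Mn * max 1 ((B + 1) / 2) * (\<Sum>i<d. \<bar>\<beta>h i - \<beta>s i\<bar>))"
    using p w hess_term_diff_le[OF _ j k fourth_moment] by (intro abs_mix_le) blast+
  then show ?thesis
    by (simp add: hessR_eq[OF j k] mix_diff mult_ac)
qed

end

lemma binary_risk_model_if_smooth_order:
  assumes Q: "\<And>y. y \<in> {1, -1} \<Longrightarrow> prob_space (Q y) \<and> sets (Q y) = sets (borel_Rd d)"
    and density: "cond_density d f" and smooth: "smooth_order l C L \<zeta> f" and l: "2 \<le> l"
    and coord_bound: "\<And>y. y \<in> {1, -1} \<Longrightarrow> AE z in Q y. \<forall>j<d. \<bar>z j\<bar> \<le> Mn"
  shows "binary_risk_model d Q f (\<lambda>y x z. deriv (\<lambda>x. f x y z) x) C Mn"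
proof (rule binary_risk_model.intro)
  fix y :: real and z :: "nat \<Rightarrow> real"
  assume y: "y \<in> {1, -1}"
  note second_order = smooth_order_second_order[OF smooth l y]
  show "prob_space (Q y)" "sets (Q y) = sets (borel_Rd d)" "AE z in Q y. \<forall>j<d. \<bar>z j\<bar> \<le> Mn"
    using Q[OF y] coord_bound[OF y] by auto
  show "((\<lambda>x. f x y z) has_real_derivative deriv (\<lambda>x. f x y z) x) (at x)"
    "\<bar>f x y z\<bar> \<le> C" "\<bar>deriv (\<lambda>x. f x y z) x\<bar> \<le> C" for x
    using second_order(1,3,4) by blast+
  show "\<bar>deriv (\<lambda>x. f x y z) u - deriv (\<lambda>x. f x y z) v\<bar> \<le> C * \<bar>u - v\<bar>" for u v
    using abs_diff_le_of_deriv_bound[OF second_order(2,5)] .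
qed (rule density)

theorem lemma6:
  fixes C L \<zeta> c W B C4 :: real and l :: nat and Ker :: "real \<Rightarrow> real"
  assumes "l \<ge> 2" and "C > 0" and "L > 0" and "0 < \<zeta>" and "\<zeta> \<le> 1"
    and "0 < c" and "W > 0" and "B > 0" and "C4 > 0"
    and "kernel_ok l Ker"
  shows "\<exists>K. \<forall>(d::nat) (n::nat) (\<delta>::real) (Mn::real) (p::real) (w::real \<Rightarrow> real)
           (Q::real \<Rightarrow> (nat \<Rightarrow> real) measure) (f::real \<Rightarrow> real \<Rightarrow> (nat \<Rightarrow> real) \<Rightarrow> real)
           (\<beta>s::nat \<Rightarrow> real) (\<beta>h::nat \<Rightarrow> real).
      \<comment> \<open>the joint law of (X,Y,Z)\<close>
      (\<forall>y\<in>{1, -1::real}. prob_space (Q y) \<and> sets (Q y) = sets (PiM {..<d} (\<lambda>_. borel))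
                          \<and> space (Q y) = space (PiM {..<d} (\<lambda>_. borel :: real measure)))
      \<and> cond_density d f
      \<comment> \<open>(A1)\<close>
      \<and> smooth_order l C L \<zeta> f
      \<comment> \<open>(A3)\<close>
      \<and> c \<le> p \<and> p \<le> 1 - c
      \<and> (\<forall>y\<in>{1, -1::real}. 0 < w y \<and> w y \<le> W)
      \<comment> \<open>(A4)\<close>
      \<and> n > 0 \<and> \<delta> > 0
      \<and> (\<forall>y\<in>{1, -1::real}. AE z in Q y. \<forall>j<d. \<bar>z j\<bar> \<le> Mn)
      \<and> Mn\<^sup>2 \<le> C4 * sqrt (real n * \<delta> / ln (real d))
      \<and> (\<forall>y\<in>{1, -1::real}. \<forall>j<d. (\<integral>z. (z j) ^ 4 \<partial>Q y) \<le> B)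
      \<comment> \<open>beta* is the unique minimizer of R\<close>
      \<and> (\<forall>\<beta>. risk d p w Q f \<beta>s \<le> risk d p w Q f \<beta>)
      \<and> (\<forall>\<beta>. (\<forall>\<beta>'. risk d p w Q f \<beta> \<le> risk d p w Q f \<beta>') \<longrightarrow> (\<forall>j<d. \<beta> j = \<beta>s j))
      \<longrightarrow>
      (\<forall>j<d. \<bar>gradR d p w Q f \<beta>h j - gradR d p w Q f \<beta>s j\<bar>
                \<le> K * Mn * (\<Sum>i<d. \<bar>\<beta>h i - \<beta>s i\<bar>))
      \<and> (\<forall>j<d. \<forall>k<d. \<bar>hessR d p w Q f \<beta>h j k - hessR d p w Q f \<beta>s j k\<bar>
                \<le> K * Mn * (\<Sum>i<d. \<bar>\<beta>h i - \<beta>s i\<bar>))"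
proof (intro exI[of _ "W * C * max 1 ((B + 1) / 2)"] allI impI, elim conjE, goal_cases)
  case (1 d n \<delta> Mn p w Q f \<beta>s \<beta>h)
  interpret binary_risk_model d Q f "\<lambda>y x z. deriv (\<lambda>x. f x y z) x" C Mn
    using 1(1-3,9) \<open>l \<ge> 2\<close> by (intro binary_risk_model_if_smooth_order) auto
  have p: "0 \<le> p" "p \<le> 1"
    using 1(4,5) \<open>0 < c\<close> by auto
  have w: "0 \<le> w y \<and> w y \<le> W" and fourth_moment: "\<forall>j<d. (\<integral>z. (z j) ^ 4 \<partial>Q y) \<le> B"
    if "y \<in> {1, -1}" for y :: real
    using 1(6,11) that by (blast dest: less_imp_le)+
  show ?case
    using gradR_lipschitz[where w = w, OF p w fourth_moment] hessR_lipschitz[where w = w, OF p w fourth_moment]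
    by blast
qed

end
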